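(* Let $D$ be a strongly connected oriented graph such that for every vertex $x$, $x^+$ induces a transitive tournament. Then the inclusion-wise maximal hubs of $D$ form a partition of $V(D)$. Moreover, for any two distinct maximal hubs $H_1,H_2$, exactly one of the following holds: (i) there is no arc between $H_1$ and $H_2$; (ii) there is a nonempty set $S\subseteq H_2$ inducing a transitive tournament such that the arcs between $H_1$ and $H_2$ are exactly all arcs $hs$ with $h\in H_1$, $s\in S$; (iii) the same as (ii) with the roles of $H_1$ and $H_2$ exchanged.
   Context: Digraphs are finite, no loops, no parallel arcs; an oriented graph has no digon. $x^+$, $x^-$ denote out- and in-neighbourhoods. A hub of $D$ is a set $H\subseteq V(D)$ such that $D[H]$ is strongly connected and there exists a vertex $x\notin H$ with $H\subseteq x^-$. (Every single vertex forms a hub, since $D$ is strong.) *)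

theory Defs
  imports Main
begin

definition digraph :: "'a set \<Rightarrow> ('a \<times> 'a) set \<Rightarrow> bool" where
  "digraph V A \<longleftrightarrow> finite V \<and> A \<subseteq> V \<times> V \<and> (\<forall>x. (x, x) \<notin> A)"

definition oriented :: "'a set \<Rightarrow> ('a \<times> 'a) set \<Rightarrow> bool" where
  "oriented V A \<longleftrightarrow> digraph V A \<and> (\<forall>x y. (x, y) \<in> A \<longrightarrow> (y, x) \<notin> A)"

definition outnbhd :: "('a \<times> 'a) set \<Rightarrow> 'a \<Rightarrow> 'a set" where
  "outnbhd A x = {y. (x, y) \<in> A}"

definition innbhd :: "('a \<times> 'a) set \<Rightarrow> 'a \<Rightarrow> 'a set" where
  "innbhd A x = {y. (y, x) \<in> A}"

definition induced_arcs :: "('a \<times> 'a) set \<Rightarrow> 'a set \<Rightarrow> ('a \<times> 'a) set" where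
  "induced_arcs A H = A \<inter> (H \<times> H)"

definition strong_induced :: "('a \<times> 'a) set \<Rightarrow> 'a set \<Rightarrow> bool" where
  "strong_induced A H \<longleftrightarrow> H \<noteq> {} \<and> (\<forall>x\<in>H. \<forall>y\<in>H. (x, y) \<in> (induced_arcs A H)\<^sup>*)"

definition transitive_tournament :: "('a \<times> 'a) set \<Rightarrow> 'a set \<Rightarrow> bool" where
  "transitive_tournament A S \<longleftrightarrow>
     (\<forall>u\<in>S. \<forall>v\<in>S. u \<noteq> v \<longrightarrow> (u, v) \<in> A \<or> (v, u) \<in> A) \<and>
     (\<forall>u\<in>S. \<forall>v\<in>S. (u, v) \<in> A \<longrightarrow> (v, u) \<notin> A) \<and>
     (\<forall>u\<in>S. \<forall>v\<in>S. \<forall>w\<in>S. (u, v) \<in> A \<and> (v, w) \<in> A \<longrightarrow> (u, w) \<in> A)"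

definition hub :: "'a set \<Rightarrow> ('a \<times> 'a) set \<Rightarrow> 'a set \<Rightarrow> bool" where
  "hub V A H \<longleftrightarrow> H \<subseteq> V \<and> strong_induced A H \<and> (\<exists>x\<in>V. x \<notin> H \<and> H \<subseteq> innbhd A x)"

definition maximal_hub :: "'a set \<Rightarrow> ('a \<times> 'a) set \<Rightarrow> 'a set \<Rightarrow> bool" where
  "maximal_hub V A H \<longleftrightarrow> hub V A H \<and> (\<forall>H'. hub V A H' \<and> H \<subseteq> H' \<longrightarrow> H' = H)"

definition arcs_between :: "('a \<times> 'a) set \<Rightarrow> 'a set \<Rightarrow> 'a set \<Rightarrow> ('a \<times> 'a) set" where
  "arcs_between A X Y = {(u, v) \<in> A. (u \<in> X \<and> v \<in> Y) \<or> (u \<in> Y \<and> v \<in> X)}"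

end

theory Submission
  imports Defs
begin

(* Let H be a hub with sink x. For an arc uw inside H, the out-neighbourhood of u is a
   transitive tournament containing w and x, so "w has an arc to z" follows from "u has an
   arc to z" whenever u -> z and x -> z (or z = x); as D[H] is strong, such a property of
   one vertex of H spreads to all of H. If two hubs share a vertex v, their sinks lie in
   the tournament v^+, and the head of the arc between them is a sink of both hubs: so
   intersecting hubs unite to a hub, and maximal hubs are disjoint. Singletons are hubs
   because D is strong, so maximal hubs cover V. In a maximal hub H, an arc into y outside H
   spreads to all of H, for otherwise y could be added to H. Hence if H1 sends an arc into
   H2, all of H1 dominates the set S of heads of such arcs, no arc goes back, and S lies in
   the transitive tournament a^+ for any a in H1. *)

lemma transitive_tournament_subset:
  "transitive_tournament A S \<Longrightarrow> S' \<subseteq> S \<Longrightarrow> transitive_tournament A S'"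
  unfolding transitive_tournament_def by blast

lemma induced_arcs_rtrancl_mono:
  "(x, y) \<in> (induced_arcs A H)\<^sup>* \<Longrightarrow> H \<subseteq> H' \<Longrightarrow> (x, y) \<in> (induced_arcs A H')\<^sup>*"
  by (rule rtrancl_mono[THEN subsetD]) (auto simp: induced_arcs_def)

lemma strong_induced_arc_closed:
  assumes "strong_induced A H" "a \<in> H" "P a"
    and "\<And>u w. u \<in> H \<Longrightarrow> w \<in> H \<Longrightarrow> (u, w) \<in> A \<Longrightarrow> P u \<Longrightarrow> P w"
  shows "\<forall>h\<in>H. P h"
proof
  fix h assume "h \<in> H"
  with assms(1,2) have "(a, h) \<in> (induced_arcs A H)\<^sup>*"
    unfolding strong_induced_def by blast
  then show "P h"
    by (induction rule: rtrancl_induct) (use assms(3,4) in \<open>auto simp: induced_arcs_def\<close>)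
qed

lemma strong_induced_Un:
  assumes "strong_induced A H1" "strong_induced A H2" "v \<in> H1" "v \<in> H2"
  shows "strong_induced A (H1 \<union> H2)"
proof -
  let ?r = "(induced_arcs A (H1 \<union> H2))\<^sup>*"
  have "(p, v) \<in> ?r \<and> (v, p) \<in> ?r" if "p \<in> H1 \<union> H2" for p
    using that assms induced_arcs_rtrancl_mono[of _ _ A H1 "H1 \<union> H2"]
      induced_arcs_rtrancl_mono[of _ _ A H2 "H1 \<union> H2"]
    unfolding strong_induced_def by blast
  then show ?thesis
    unfolding strong_induced_def using assms(3) by (blast intro: rtrancl_trans)
qed

lemma strong_induced_insert:
  assumes "strong_induced A H" "a \<in> H" "b \<in> H" "(a, y) \<in> A" "(y, b) \<in> A"
  shows "strong_induced A (insert y H)"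
proof -
  let ?r = "induced_arcs A (insert y H)"
  have ay: "(a, y) \<in> ?r" and yb: "(y, b) \<in> ?r"
    using assms unfolding induced_arcs_def by auto
  have "(p, a) \<in> ?r\<^sup>* \<and> (b, p) \<in> ?r\<^sup>*" if "p \<in> H" for p
    using that assms(1-3) induced_arcs_rtrancl_mono[of _ _ A H "insert y H"]
    unfolding strong_induced_def by blast
  then have "(p, y) \<in> ?r\<^sup>* \<and> (y, p) \<in> ?r\<^sup>*" if "p \<in> insert y H" for p
    using that ay yb by (auto intro: rtrancl_into_rtrancl converse_rtrancl_into_rtrancl)
  then show ?thesis
    unfolding strong_induced_def by (blast intro: rtrancl_trans)
qed

lemma hub_insert:
  assumes "H \<subseteq> V" "strong_induced A H" "x \<in> V" "x \<notin> H" "H \<subseteq> innbhd A x"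
    and "y \<in> V" "y \<noteq> x" "(y, x) \<in> A"
    and "a \<in> H" "b \<in> H" "(a, y) \<in> A" "(y, b) \<in> A"
  shows "hub V A (insert y H)"
  unfolding hub_def using assms strong_induced_insert[OF assms(2,9,10,11,12)]
  by (auto simp: innbhd_def)

lemma singleton_hub:
  assumes "digraph V A" "card V \<ge> 2" "strong_induced A V" "v \<in> V"
  shows "hub V A {v}"
proof -
  have "V - {v} \<noteq> {}"
  proof
    assume "V - {v} = {}"
    then have "card V \<le> card {v}"
      by (intro card_mono) auto
    with assms(2) show False by simp
  qed
  then obtain w where w: "w \<in> V" "w \<noteq> v" by blast
  with assms(3,4) have "(v, w) \<in> (induced_arcs A V)\<^sup>*"
    unfolding strong_induced_def by blast
  with w(2) obtain z where "(v, z) \<in> induced_arcs A V"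
    by (blast elim: converse_rtranclE)
  with assms(1) show ?thesis
    unfolding hub_def innbhd_def strong_induced_def induced_arcs_def digraph_def by auto
qed

lemma maximal_hub_nonempty: "maximal_hub V A H \<Longrightarrow> H \<noteq> {}"
  unfolding maximal_hub_def hub_def strong_induced_def by auto

lemma hub_le_maximal_hub:
  assumes "finite V" "hub V A H"
  obtains M where "maximal_hub V A M" "H \<subseteq> M"
proof -
  let ?F = "{H'. hub V A H' \<and> H \<subseteq> H'}"
  have "?F \<subseteq> Pow V"
    unfolding hub_def by auto
  then have "finite ?F"
    using assms(1) by (meson finite_Pow_iff finite_subset)
  then obtain M where "M \<in> ?F" "\<forall>H'\<in>?F. M \<subseteq> H' \<longrightarrow> M = H'"
    using finite_has_maximal2[of ?F H] assms(2) by auto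
  then have "maximal_hub V A M" "H \<subseteq> M"
    unfolding maximal_hub_def by auto
  then show thesis
    by (rule that)
qed

lemma maximal_hubs_cover:
  assumes "digraph V A" "card V \<ge> 2" "strong_induced A V"
  shows "\<Union>{H. maximal_hub V A H} = V"
proof
  show "\<Union>{H. maximal_hub V A H} \<subseteq> V"
    unfolding maximal_hub_def hub_def by auto
  show "V \<subseteq> \<Union>{H. maximal_hub V A H}"
  proof
    fix v assume "v \<in> V"
    moreover have "finite V"
      using assms(1) unfolding digraph_def by simp
    ultimately show "v \<in> \<Union>{H. maximal_hub V A H}"
      using singleton_hub[OF assms] hub_le_maximal_hub by blast
  qed
qed

locale out_transitive_oriented =
  fixes V :: "'a set" and A :: "('a \<times> 'a) set"
  assumes oriented: "oriented V A"
    and out_transitive: "\<And>x. x \<in> V \<Longrightarrow> transitive_tournament A (outnbhd A x)"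
begin

lemma arc_in_V: "(u, v) \<in> A \<Longrightarrow> u \<in> V \<and> v \<in> V"
  using oriented unfolding oriented_def digraph_def by blast

lemma arc_asym: "(u, v) \<in> A \<Longrightarrow> (v, u) \<notin> A"
  using oriented unfolding oriented_def by blast

lemma out_arc_total:
  "(u, v) \<in> A \<Longrightarrow> (u, w) \<in> A \<Longrightarrow> v \<noteq> w \<Longrightarrow> (v, w) \<in> A \<or> (w, v) \<in> A"
  using out_transitive[of u] arc_in_V[of u v]
  unfolding transitive_tournament_def outnbhd_def by blast

lemma out_arc_trans:
  "(u, v) \<in> A \<Longrightarrow> (u, w) \<in> A \<Longrightarrow> (u, z) \<in> A \<Longrightarrow> (v, w) \<in> A \<Longrightarrow> (w, z) \<in> A
    \<Longrightarrow> (v, z) \<in> A"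
  using out_transitive[of u] arc_in_V[of u v]
  unfolding transitive_tournament_def outnbhd_def by blast

lemma innbhd_shift:
  assumes "strong_induced A H" "H \<subseteq> innbhd A x1" "(x1, x2) \<in> A" "v \<in> H" "(v, x2) \<in> A"
  shows "H \<subseteq> innbhd A x2"
proof -
  have "\<forall>h\<in>H. (h, x2) \<in> A"
  proof (rule strong_induced_arc_closed[where P = "\<lambda>h. (h, x2) \<in> A", OF assms(1,4,5)])
    fix u w assume "u \<in> H" "w \<in> H" "(u, w) \<in> A" "(u, x2) \<in> A"
    then show "(w, x2) \<in> A"
      using assms(2,3) out_arc_trans[of u w x1 x2] by (auto simp: innbhd_def)
  qed
  then show ?thesis by (auto simp: innbhd_def)
qed

lemma hub_Un:
  assumes "hub V A H1" "hub V A H2" "v \<in> H1" "v \<in> H2"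
  shows "hub V A (H1 \<union> H2)"
proof -
  obtain x1 where x1: "x1 \<in> V" "x1 \<notin> H1" "H1 \<subseteq> innbhd A x1"
    using assms(1) unfolding hub_def by blast
  obtain x2 where x2: "x2 \<in> V" "x2 \<notin> H2" "H2 \<subseteq> innbhd A x2"
    using assms(2) unfolding hub_def by blast
  have strong: "strong_induced A H1" "strong_induced A H2"
    using assms(1,2) unfolding hub_def by auto
  have v: "(v, x1) \<in> A" "(v, x2) \<in> A"
    using assms(3,4) x1 x2 by (auto simp: innbhd_def)
  have "\<exists>x\<in>V. x \<notin> H1 \<union> H2 \<and> H1 \<union> H2 \<subseteq> innbhd A x"
  proof (cases "x1 = x2")
    case False
    with v consider "(x1, x2) \<in> A" | "(x2, x1) \<in> A"
      using out_arc_total by blast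
    then show ?thesis
    proof cases
      case 1
      then have "x2 \<notin> H1"
        using x1(3) arc_asym by (auto simp: innbhd_def)
      then show ?thesis
        using x2 innbhd_shift[OF strong(1) x1(3) 1 assms(3) v(2)] by blast
    next
      case 2
      then have "x1 \<notin> H2"
        using x2(3) arc_asym by (auto simp: innbhd_def)
      then show ?thesis
        using x1 innbhd_shift[OF strong(2) x2(3) 2 assms(4) v(1)] by blast
    qed
  qed (use x1 x2 in blast)
  then show ?thesis
    using assms strong_induced_Un[OF strong assms(3,4)] unfolding hub_def by blast
qed

lemma maximal_hubs_disjoint:
  assumes "maximal_hub V A H1" "maximal_hub V A H2" "H1 \<noteq> H2"
  shows "H1 \<inter> H2 = {}"
proof (rule ccontr)
  assume "H1 \<inter> H2 \<noteq> {}"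
  then have "hub V A (H1 \<union> H2)"
    using assms(1,2) hub_Un unfolding maximal_hub_def by blast
  then show False
    using assms unfolding maximal_hub_def by blast
qed

lemma maximal_hub_absorbs:
  assumes "maximal_hub V A H" "y \<in> V" "y \<notin> H" "a \<in> H" "(a, y) \<in> A"
  shows "\<forall>h\<in>H. (h, y) \<in> A"
proof -
  have H: "H \<subseteq> V" "strong_induced A H"
    using assms(1) unfolding maximal_hub_def hub_def by auto
  obtain x where x: "x \<in> V" "x \<notin> H" "H \<subseteq> innbhd A x"
    using assms(1) unfolding maximal_hub_def hub_def by blast
  show ?thesis
  proof (rule strong_induced_arc_closed[where P = "\<lambda>h. (h, y) \<in> A", OF H(2) assms(4,5)])
    fix u w assume uw: "u \<in> H" "w \<in> H" "(u, w) \<in> A" "(u, y) \<in> A"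
    have ux: "(u, x) \<in> A" and wx: "(w, x) \<in> A"
      using uw x(3) by (auto simp: innbhd_def)
    show "(w, y) \<in> A"
    proof (rule ccontr)
      assume wy: "(w, y) \<notin> A"
      then have "y \<noteq> x" using wx by blast
      then have "(y, w) \<in> A" "(y, x) \<in> A"
        using wy uw assms(3) ux out_arc_total[of u w y] out_arc_total[of u x y]
          out_arc_trans[of u w x y] wx by blast+
      then have "hub V A (insert y H)"
        using hub_insert[OF H x assms(2) \<open>y \<noteq> x\<close>] uw by blast
      with assms(1,3) show False
        unfolding maximal_hub_def by blast
    qed
  qed
qed

lemma maximal_hubs_no_arc_back:
  assumes "maximal_hub V A H1" "maximal_hub V A H2" "H1 \<inter> H2 = {}"
    and "a \<in> H1" "s \<in> H2" "(a, s) \<in> A" "h \<in> H1" "t \<in> H2"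
  shows "(t, h) \<notin> A"
proof
  assume "(t, h) \<in> A"
  then have "(s, h) \<in> A"
    using maximal_hub_absorbs[OF assms(2)] assms arc_in_V by blast
  moreover have "(h, s) \<in> A"
    using maximal_hub_absorbs[OF assms(1)] assms arc_in_V by blast
  ultimately show False
    using arc_asym by blast
qed

lemma arcs_between_maximal_hubs:
  assumes "maximal_hub V A H1" "maximal_hub V A H2" "H1 \<inter> H2 = {}"
    and "a \<in> H1" "s \<in> H2" "(a, s) \<in> A"
  shows "\<exists>S. S \<noteq> {} \<and> S \<subseteq> H2 \<and> transitive_tournament A S \<and> arcs_between A H1 H2 = H1 \<times> S"
proof -
  define S where "S = {t \<in> H2. \<exists>h\<in>H1. (h, t) \<in> A}"
  have into_S: "(h, t) \<in> A" if "h \<in> H1" "t \<in> S" for h t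
    using that maximal_hub_absorbs[OF assms(1)] assms(3) arc_in_V unfolding S_def by blast
  have "S \<subseteq> outnbhd A a"
    using into_S assms(4) by (auto simp: outnbhd_def)
  then have "transitive_tournament A S"
    using out_transitive transitive_tournament_subset assms(6) arc_in_V by blast
  moreover have "arcs_between A H1 H2 = H1 \<times> S"
    using into_S maximal_hubs_no_arc_back[OF assms] unfolding arcs_between_def S_def by auto
  moreover have "S \<noteq> {}" "S \<subseteq> H2"
    using assms(4-6) unfolding S_def by auto
  ultimately show ?thesis by blast
qed

lemma maximal_hubs_arc_cases:
  assumes "maximal_hub V A H1" "maximal_hub V A H2" "H1 \<noteq> H2"
  shows "arcs_between A H1 H2 = {}
    \<or> (\<exists>S. S \<noteq> {} \<and> S \<subseteq> H2 \<and> transitive_tournament A S \<and> arcs_between A H1 H2 = H1 \<times> S)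
    \<or> (\<exists>S. S \<noteq> {} \<and> S \<subseteq> H1 \<and> transitive_tournament A S \<and> arcs_between A H1 H2 = H2 \<times> S)"
proof -
  have disjoint: "H1 \<inter> H2 = {}" "H2 \<inter> H1 = {}"
    using maximal_hubs_disjoint[OF assms] by auto
  have sym: "arcs_between A H2 H1 = arcs_between A H1 H2"
    unfolding arcs_between_def by auto
  show ?thesis
  proof (cases "arcs_between A H1 H2 = {}")
    case False
    then obtain u w where "(u, w) \<in> A" "u \<in> H1 \<and> w \<in> H2 \<or> u \<in> H2 \<and> w \<in> H1"
      unfolding arcs_between_def by auto
    then show ?thesis
    proof (elim disjE conjE)
      assume "u \<in> H1" "w \<in> H2"
      then show ?thesis
        using arcs_between_maximal_hubs[OF assms(1,2) disjoint(1)] \<open>(u, w) \<in> A\<close> by blast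
    next
      assume "u \<in> H2" "w \<in> H1"
      then show ?thesis
        using arcs_between_maximal_hubs[OF assms(2,1) disjoint(2)] \<open>(u, w) \<in> A\<close>
        unfolding sym by blast
    qed
  qed simp
qed

lemma maximal_hubs_arc_pattern:
  assumes "maximal_hub V A H1" "maximal_hub V A H2" "H1 \<noteq> H2"
  shows "let P1 = (arcs_between A H1 H2 = {});
             P2 = (\<exists>S. S \<noteq> {} \<and> S \<subseteq> H2 \<and> transitive_tournament A S \<and>
                       arcs_between A H1 H2 = H1 \<times> S);
             P3 = (\<exists>S. S \<noteq> {} \<and> S \<subseteq> H1 \<and> transitive_tournament A S \<and>
                       arcs_between A H1 H2 = H2 \<times> S)
         in (P1 \<or> P2 \<or> P3) \<and> \<not> (P1 \<and> P2) \<and> \<not> (P1 \<and> P3) \<and> \<not> (P2 \<and> P3)"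
proof -
  have "H1 \<noteq> {}" "H2 \<noteq> {}"
    using assms(1,2) maximal_hub_nonempty by auto
  then have "H1 \<times> S \<noteq> {} \<and> H2 \<times> S \<noteq> {} \<and> H1 \<times> S \<noteq> H2 \<times> S'"
    if "S \<noteq> {}" for S S' :: "'a set"
    using that assms(3) by (auto simp: times_eq_iff)
  then show ?thesis
    using maximal_hubs_arc_cases[OF assms] unfolding Let_def by metis
qed

end

theorem claim2p5:
  fixes V :: "'a set" and A :: "('a \<times> 'a) set"
  assumes "oriented V A"
    and "card V \<ge> 2"
    and "strong_induced A V"
    and "\<forall>x\<in>V. transitive_tournament A (outnbhd A x)"
  shows "(\<forall>H. maximal_hub V A H \<longrightarrow> H \<noteq> {})
     \<and> (\<forall>H1 H2. maximal_hub V A H1 \<and> maximal_hub V A H2 \<and> H1 \<noteq> H2 \<longrightarrow> H1 \<inter> H2 = {})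
     \<and> \<Union>{H. maximal_hub V A H} = V
     \<and> (\<forall>H1 H2. maximal_hub V A H1 \<and> maximal_hub V A H2 \<and> H1 \<noteq> H2 \<longrightarrow>
          (let P1 = (arcs_between A H1 H2 = {});
               P2 = (\<exists>S. S \<noteq> {} \<and> S \<subseteq> H2 \<and> transitive_tournament A S \<and>
                         arcs_between A H1 H2 = H1 \<times> S);
               P3 = (\<exists>S. S \<noteq> {} \<and> S \<subseteq> H1 \<and> transitive_tournament A S \<and>
                         arcs_between A H1 H2 = H2 \<times> S)
           in (P1 \<or> P2 \<or> P3) \<and> \<not> (P1 \<and> P2) \<and> \<not> (P1 \<and> P3) \<and> \<not> (P2 \<and> P3)))"
proof -
  interpret out_transitive_oriented V A
    using assms(1,4) by unfold_locales auto
  have "digraph V A"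
    using assms(1) unfolding oriented_def by simp
  then show ?thesis
    using maximal_hubs_cover[OF _ assms(2,3)] maximal_hub_nonempty maximal_hubs_disjoint
      maximal_hubs_arc_pattern
    by blast
qed

end
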